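(* Let $\mathcal{A}\subseteq\wp(\mathcal{G})$. (1) If $\emptyset\notin\mathrm{Ext}(\mathcal{A})$, then $\mathrm{Ext}(\mathcal{A})$ is coherent, $\mathcal{A}\subseteq\mathrm{Ext}(\mathcal{A})$, and $\mathrm{Ext}(\mathcal{A})\subseteq\mathcal{K}$ for every coherent $\mathcal{K}\subseteq\wp(\mathcal{G})$ with $\mathcal{A}\subseteq\mathcal{K}$; i.e. $\mathrm{Ext}(\mathcal{A})$ is the minimal coherent set extending $\mathcal{A}$. (2) If $\emptyset\in\mathrm{Ext}(\mathcal{A})$, then there is no coherent $\mathcal{K}\subseteq\wp(\mathcal{G})$ with $\mathcal{A}\subseteq\mathcal{K}$.
   Context: $\Omega$ is a non-empty set and $\mathcal{G}$ is the set of bounded functions $\Omega\to\mathbb{R}$. $f\geq g$ means pointwise $\geq$; $f\gneq g$ means $f\geq g$ and $f\neq g$; $\mathcal{G}_{\gneq 0}=\{f: f\gneq 0\}$. $\mathrm{posi}(B)=\{\sum_{i=1}^m\lambda_i h_i: m\geq1,\lambda_i>0,h_i\in B\}$, and $\mathcal{E}(E):=\mathrm{posi}(E\cup\mathcal{G}_{\gneq 0})$. A set $\mathcal{K}\subseteq\wp(\mathcal{G})$ is coherent if: (K$_\emptyset$) $\emptyset\notin\mathcal{K}$; (K$_0$) if $A\in\mathcal{K}$ then $A\setminus\{0\}\in\mathcal{K}$; (K$_{\gneq0}$) if $g\in\mathcal{G}_{\gneq0}$ then $\{g\}\in\mathcal{K}$; (K$_\supseteq$) if $A\in\mathcal{K}$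 and $B\supseteq A$ then $B\in\mathcal{K}$; (K$_{\mathrm{Dom}}$) if $A\in\mathcal{K}$ and for each $g\in A$, $f_g$ is a gamble with $f_g\geq g$, then $\{f_g: g\in A\}\in\mathcal{K}$; (K$_{\mathrm{Add}}$) if $A_1,\ldots,A_n\in\mathcal{K}$ (finitely many) and for each $\langle g_1,\ldots,g_n\rangle\in A_1\times\cdots\times A_n$, $f_{\langle g_1,\ldots,g_n\rangle}$ is some member of $\mathrm{posi}(\{g_1,\ldots,g_n\})$, then $\{f_{\langle g_1,\ldots,g_n\rangle}:\langle g_1,\ldots,g_n\rangle\in A_1\times\cdots\times A_n\}\in\mathcal{K}$. Definition of $\mathrm{Ext}$: if $\mathcal{A}\neq\emptyset$, $B\in\mathrm{Ext}(\mathcal{A})$ iff there are finitely many $A_1,\ldots,A_n\in\mathcal{A}$ ($n\geq1$) such that for each $\langle g_1,\ldots,g_n\rangle\in A_1\times\cdots\times A_n$ with $0\notin\mathcal{E}(\{g_1,\ldots,g_n\})$, there is some $f\in B$ with $f\in\mathcal{E}(\{g_1,\ldots,g_n\})$. If $\mathcal{A}=\emptyset$, $B\in\mathrm{Ext}(\emptyset)$ iff $B\cap\mathcal{G}_{\gneq0}\neq\emptyset$. *)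

theory Defs
  imports Complex_Main "HOL-Library.FuncSet"
begin

definition gambles :: "('w \<Rightarrow> real) set" where
  "gambles = {f. \<exists>B. \<forall>w. \<bar>f w\<bar> \<le> B}"

definition gneq :: "('w \<Rightarrow> real) \<Rightarrow> ('w \<Rightarrow> real) \<Rightarrow> bool" where
  "gneq f g \<longleftrightarrow> (\<forall>w. f w \<ge> g w) \<and> f \<noteq> g"

definition gpos :: "('w \<Rightarrow> real) set" where
  "gpos = {f \<in> gambles. gneq f (\<lambda>_. 0)}"

definition posi :: "('w \<Rightarrow> real) set \<Rightarrow> ('w \<Rightarrow> real) set" where
  "posi B = {f. \<exists>m::nat. \<exists>lam h. m \<ge> 1 \<and> (\<forall>i<m. lam i > (0::real) \<and> h i \<in> B)
              \<and> f = (\<lambda>w. \<Sum>i<m. lam i * h i w)}"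

definition EE :: "('w \<Rightarrow> real) set \<Rightarrow> ('w \<Rightarrow> real) set" where
  "EE E = posi (E \<union> gpos)"

definition coherent :: "('w \<Rightarrow> real) set set \<Rightarrow> bool" where
  "coherent K \<longleftrightarrow>
     {} \<notin> K
   \<and> (\<forall>A\<in>K. A - {\<lambda>_. 0} \<in> K)
   \<and> (\<forall>g\<in>gpos. {g} \<in> K)
   \<and> (\<forall>A\<in>K. \<forall>B. A \<subseteq> B \<and> B \<subseteq> gambles \<longrightarrow> B \<in> K)
   \<and> (\<forall>A\<in>K. \<forall>F. (\<forall>g\<in>A. F g \<in> gambles \<and> (\<forall>w. F g w \<ge> g w)) \<longrightarrow> F ` A \<in> K)
   \<and> (\<forall>n::nat. \<forall>As F. n \<ge> 1 \<and> (\<forall>i<n. As i \<in> K)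
        \<and> (\<forall>g\<in>Pi\<^sub>E {..<n} As. F g \<in> posi (g ` {..<n}))
        \<longrightarrow> F ` (Pi\<^sub>E {..<n} As) \<in> K)"

definition Ext :: "('w \<Rightarrow> real) set set \<Rightarrow> ('w \<Rightarrow> real) set set" where
  "Ext \<A> = (if \<A> = {} then {B. B \<subseteq> gambles \<and> B \<inter> gpos \<noteq> {}}
    else {B. B \<subseteq> gambles \<and> (\<exists>n::nat. \<exists>As. n \<ge> 1 \<and> (\<forall>i<n. As i \<in> \<A>) \<and>
            (\<forall>g\<in>Pi\<^sub>E {..<n} As. (\<lambda>_. 0) \<notin> EE (g ` {..<n}) \<longrightarrow>
                 (\<exists>f\<in>B. f \<in> EE (g ` {..<n}))))})"

end

theory Submission
  imports Defs
begin

text \<open>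
  Everything rests on the cone EE S = posi (S \<union> gpos): it is monotone in S, closed under
  positive combinations and under raising gambles, and each of its elements is either in gpos
  or dominates a positive combination of S.

  Each coherence axiom for Ext \<A> turns a witnessing family of members of \<A> for a set into one
  for the transformed set. For K_Add, the witnessing families of the sets Bs i are concatenated
  into a single family, every selection from which contains a selection from each of them, so
  the chosen elements of the Bs i all lie in one cone EE, and so does their positive combination.

  Minimality: let K be coherent with \<A> \<subseteq> K and B \<in> Ext \<A> without positive elements. For
  each selection g of the witnessing family choose a positive combination of g that lies below 0
  or below some element of B. K_Add puts the set of these combinations into K, K_Dom raises them
  to 0 or to elements of B, K_0 removes 0, and K_\<supseteq> gives B \<in> K. Part (2) follows since a
  coherent K never contains the empty set.
\<close>

lemma sum_lessThan_add:
  fixes m n :: nat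
  shows "(\<Sum>i<m + n. f i) = (\<Sum>i<m. f i) + (\<Sum>i<n. f (m + i))"
  by (induction n) (auto simp: add.assoc)

lemma PiE_choice:
  assumes "\<And>i. i \<in> I \<Longrightarrow> \<exists>x\<in>A i. P i x"
  shows "\<exists>h\<in>Pi\<^sub>E I A. \<forall>i\<in>I. P i (h i)"
proof -
  obtain f where "\<forall>i\<in>I. f i \<in> A i \<and> P i (f i)"
    using bchoice[of I "\<lambda>i x. x \<in> A i \<and> P i x"] assms by blast
  then show ?thesis by (intro bexI[of _ "restrict f I"]) auto
qed

lemma zero_in_gambles: "(\<lambda>_. 0) \<in> gambles"
  unfolding gambles_def by auto

lemma gambles_add: "a \<in> gambles \<Longrightarrow> b \<in> gambles \<Longrightarrow> (\<lambda>w. a w + b w) \<in> gambles"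
proof -
  assume "a \<in> gambles" "b \<in> gambles"
  then obtain Ba Bb where "\<forall>w. \<bar>a w\<bar> \<le> Ba" "\<forall>w. \<bar>b w\<bar> \<le> Bb"
    unfolding gambles_def by auto
  then have "\<bar>a w + b w\<bar> \<le> Ba + Bb" for w
    using abs_triangle_ineq[of "a w" "b w"] by (meson add_mono order_trans)
  then show ?thesis unfolding gambles_def by auto
qed

lemma gambles_scale: "a \<in> gambles \<Longrightarrow> (\<lambda>w. c * a w) \<in> gambles"
proof -
  assume "a \<in> gambles"
  then obtain B where "\<forall>w. \<bar>a w\<bar> \<le> B" unfolding gambles_def by auto
  then have "\<forall>w. \<bar>c * a w\<bar> \<le> \<bar>c\<bar> * B" by (simp add: abs_mult mult_left_mono)
  then show ?thesis unfolding gambles_def by auto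
qed

lemma gambles_diff: "a \<in> gambles \<Longrightarrow> b \<in> gambles \<Longrightarrow> (\<lambda>w. a w - b w) \<in> gambles"
  using gambles_add[of a "\<lambda>w. (-1) * b w"] gambles_scale[of b "-1"] by simp

lemma gpos_iff: "f \<in> gpos \<longleftrightarrow> f \<in> gambles \<and> (\<forall>w. f w \<ge> 0) \<and> (\<exists>w. f w > 0)"
  unfolding gpos_def gneq_def fun_eq_iff by (auto simp: less_le)

lemma zero_notin_gpos: "(\<lambda>_. 0) \<notin> gpos"
  by (simp add: gpos_iff)

lemma gpos_add: "a \<in> gpos \<Longrightarrow> b \<in> gpos \<Longrightarrow> (\<lambda>w. a w + b w) \<in> gpos"
  by (fastforce simp: gpos_iff gambles_add intro: add_pos_nonneg)

lemma gpos_scale: "a \<in> gpos \<Longrightarrow> c > 0 \<Longrightarrow> (\<lambda>w. c * a w) \<in> gpos"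
  by (auto simp: gpos_iff gambles_scale intro: mult_pos_pos)

lemma gpos_upward:
  assumes "f \<in> gpos" "f' \<in> gambles" "\<forall>w. f w \<le> f' w"
  shows "f' \<in> gpos"
  using assms by (fastforce simp: gpos_iff intro: order_trans less_le_trans)

lemma subset_posi: "B \<subseteq> posi B"
  unfolding posi_def
  by (auto intro!: exI[of _ 1] exI[of _ "\<lambda>_. 1"] exI[of _ "\<lambda>_. x" for x])

lemma posi_mono: "B \<subseteq> C \<Longrightarrow> posi B \<subseteq> posi C"
  unfolding posi_def by blast

lemma posi_scale: "a \<in> posi B \<Longrightarrow> c > 0 \<Longrightarrow> (\<lambda>w. c * a w) \<in> posi B"
proof -
  assume "a \<in> posi B" "c > 0"
  then obtain m :: nat and lam :: "nat \<Rightarrow> real" and h where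
    a: "1 \<le> m" "\<forall>i<m. 0 < lam i \<and> h i \<in> B" "a = (\<lambda>w. \<Sum>i<m. lam i * h i w)"
    unfolding posi_def by blast
  have "(\<lambda>w. c * a w) = (\<lambda>w. \<Sum>i<m. (c * lam i) * h i w)"
    using a(3) by (simp add: sum_distrib_left mult.assoc)
  then show ?thesis using a \<open>c > 0\<close> unfolding posi_def
    by (intro CollectI exI[of _ m] exI[of _ "\<lambda>i. c * lam i"] exI[of _ h]) auto
qed

lemma posi_add: "a \<in> posi B \<Longrightarrow> b \<in> posi B \<Longrightarrow> (\<lambda>w. a w + b w) \<in> posi B"
proof -
  assume "a \<in> posi B" "b \<in> posi B"
  then obtain m1 m2 :: nat and l1 l2 :: "nat \<Rightarrow> real" and h1 h2 where
    a: "1 \<le> m1" "\<forall>i<m1. 0 < l1 i \<and> h1 i \<in> B" "a = (\<lambda>w. \<Sum>i<m1. l1 i * h1 i w)"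
    and b: "1 \<le> m2" "\<forall>i<m2. 0 < l2 i \<and> h2 i \<in> B" "b = (\<lambda>w. \<Sum>i<m2. l2 i * h2 i w)"
    unfolding posi_def by blast
  define l where "l i = (if i < m1 then l1 i else l2 (i - m1))" for i
  define h where "h i = (if i < m1 then h1 i else h2 (i - m1))" for i
  have "(\<lambda>w. a w + b w) = (\<lambda>w. \<Sum>i<m1 + m2. l i * h i w)"
    using a(3) b(3) by (simp add: sum_lessThan_add l_def h_def)
  moreover have "\<forall>i<m1 + m2. 0 < l i \<and> h i \<in> B"
    using a b by (auto simp: l_def h_def)
  ultimately show ?thesis using a(1) unfolding posi_def
    by (intro CollectI exI[of _ "m1 + m2"] exI[of _ l] exI[of _ h]) auto
qed

lemma posi_least:
  assumes "B \<subseteq> X"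
    and add: "\<And>a b. a \<in> X \<Longrightarrow> b \<in> X \<Longrightarrow> (\<lambda>w. a w + b w) \<in> X"
    and scale: "\<And>a c. a \<in> X \<Longrightarrow> (c::real) > 0 \<Longrightarrow> (\<lambda>w. c * a w) \<in> X"
  shows "posi B \<subseteq> X"
proof -
  have "(\<lambda>w. \<Sum>i<m. lam i * h i w) \<in> X"
    if "m \<ge> 1" "\<forall>i<m. lam i > (0::real) \<and> h i \<in> B" for m :: nat and lam h
    using that
  proof (induction m rule: nat_induct_at_least)
    case base
    then show ?case using assms(1) scale by auto
  next
    case (Suc m)
    then have "(\<lambda>w. lam m * h m w) \<in> X" using assms(1) by (intro scale) auto
    with Suc show ?case using add by simp
  qed
  then show ?thesis unfolding posi_def by blast
qed

lemma posi_posi: "posi (posi B) \<subseteq> posi B"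
  by (rule posi_least) (auto intro: posi_add posi_scale)

lemma posi_subset_gambles: "B \<subseteq> gambles \<Longrightarrow> posi B \<subseteq> gambles"
  by (rule posi_least) (auto intro: gambles_add gambles_scale)

lemma posi_gpos: "posi gpos \<subseteq> gpos"
  by (rule posi_least) (auto intro: gpos_add gpos_scale)

lemma EE_mono: "S \<subseteq> T \<Longrightarrow> EE S \<subseteq> EE T"
  unfolding EE_def by (rule posi_mono) blast

lemma posi_EE: "posi (EE S) \<subseteq> EE S"
  unfolding EE_def by (rule posi_posi)

lemma subset_EE: "S \<subseteq> EE S"
  unfolding EE_def using subset_posi by blast

lemma gpos_subset_EE: "gpos \<subseteq> EE S"
  unfolding EE_def using subset_posi by blast

lemma EE_upward:
  assumes "f \<in> EE S" "f \<in> gambles" "f' \<in> gambles" "\<forall>w. f w \<le> f' w"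
  shows "f' \<in> EE S"
proof (cases "f' = f")
  case False
  then obtain w where "f' w \<noteq> f w" by auto
  with assms have "(\<lambda>w. f' w - f w) \<in> gpos"
    by (auto simp: gpos_iff gambles_diff less_le intro!: exI[of _ w])
  then have "(\<lambda>w. f' w - f w) \<in> posi (EE S)"
    using gpos_subset_EE subset_posi by (meson subsetD)
  moreover have "f \<in> posi (EE S)" using assms(1) subset_posi by blast
  ultimately have "(\<lambda>w. f w + (f' w - f w)) \<in> EE S"
    using posi_add posi_EE by blast
  then show ?thesis by simp
qed (use assms in simp)

lemma EE_cases:
  assumes "f \<in> EE S"
  shows "f \<in> gpos \<or> (\<exists>a\<in>posi S. \<forall>w. a w \<le> f w)"
proof -
  let ?X = "gpos \<union> {f. \<exists>a\<in>posi S. \<forall>w. a w \<le> f w}"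
  have "posi (S \<union> gpos) \<subseteq> ?X"
  proof (rule posi_least)
    show "S \<union> gpos \<subseteq> ?X" using subset_posi[of S] by blast
  next
    fix x y assume x: "x \<in> ?X" and y: "y \<in> ?X"
    have nonneg: "0 \<le> u w" if "u \<in> gpos" for u w using that by (simp add: gpos_iff)
    show "(\<lambda>w. x w + y w) \<in> ?X"
    proof (cases "x \<in> gpos"; cases "y \<in> gpos")
      assume "x \<in> gpos" "y \<in> gpos"
      then show ?thesis by (simp add: gpos_add)
    next
      assume "x \<in> gpos" "y \<notin> gpos"
      with y obtain b where "b \<in> posi S" "\<forall>w. b w \<le> y w" by blast
      with nonneg[OF \<open>x \<in> gpos\<close>] show ?thesis by (auto intro!: bexI[of _ b] add_increasing)
    next
      assume "x \<notin> gpos" "y \<in> gpos"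
      with x obtain a where "a \<in> posi S" "\<forall>w. a w \<le> x w" by blast
      with nonneg[OF \<open>y \<in> gpos\<close>] show ?thesis by (auto intro!: bexI[of _ a] add_increasing2)
    next
      assume "x \<notin> gpos" "y \<notin> gpos"
      with x y obtain a b where "a \<in> posi S" "\<forall>w. a w \<le> x w" "b \<in> posi S" "\<forall>w. b w \<le> y w"
        by blast
      then show ?thesis by (auto intro!: bexI[of _ "\<lambda>w. a w + b w"] posi_add add_mono)
    qed
  next
    fix x and c :: real assume "x \<in> ?X" "c > 0"
    then show "(\<lambda>w. c * x w) \<in> ?X"
    proof (elim UnE CollectE bexE)
      fix a assume "a \<in> posi S" "\<forall>w. a w \<le> x w"
      with \<open>c > 0\<close> show ?thesis by (auto intro!: bexI[of _ "\<lambda>w. c * a w"] posi_scale)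
    qed (simp add: gpos_scale)
  qed
  then show ?thesis using assms unfolding EE_def by blast
qed

definition Ext_witness :: "nat \<Rightarrow> (nat \<Rightarrow> ('w \<Rightarrow> real) set) \<Rightarrow> ('w \<Rightarrow> real) set \<Rightarrow> bool" where
  "Ext_witness n As B \<longleftrightarrow> (\<forall>g\<in>Pi\<^sub>E {..<n} As. (\<lambda>_. 0) \<notin> EE (g ` {..<n}) \<longrightarrow>
     (\<exists>f\<in>B. f \<in> EE (g ` {..<n})))"

lemma Ext_empty: "Ext {} = {B. B \<subseteq> gambles \<and> B \<inter> gpos \<noteq> {}}"
  unfolding Ext_def by simp

lemma Ext_iff_witness:
  "\<A> \<noteq> {} \<Longrightarrow> B \<in> Ext \<A> \<longleftrightarrow>
     B \<subseteq> gambles \<and> (\<exists>n As. n \<ge> 1 \<and> (\<forall>i<n. As i \<in> \<A>) \<and> Ext_witness n As B)"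
  unfolding Ext_def Ext_witness_def by simp

lemma Ext_subset_gambles: "B \<in> Ext \<A> \<Longrightarrow> B \<subseteq> gambles"
  unfolding Ext_def by (auto split: if_splits)

lemma Ext_transfer:
  assumes "\<A> \<noteq> {}" "A \<in> Ext \<A>" "B \<subseteq> gambles"
    and "\<And>n As. Ext_witness n As A \<Longrightarrow> Ext_witness n As B"
  shows "B \<in> Ext \<A>"
  using assms unfolding Ext_iff_witness[OF assms(1)] by blast

lemma Ext_witness_mono: "Ext_witness n As A \<Longrightarrow> A \<subseteq> B \<Longrightarrow> Ext_witness n As B"
  unfolding Ext_witness_def by (meson subsetD)

lemma Ext_witness_Diff_zero:
  assumes "Ext_witness n As A"
  shows "Ext_witness n As (A - {\<lambda>_. 0})"
  unfolding Ext_witness_def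
proof (intro ballI impI)
  fix g assume "g \<in> Pi\<^sub>E {..<n} As" and zero: "(\<lambda>_. 0) \<notin> EE (g ` {..<n})"
  with assms obtain f where "f \<in> A" "f \<in> EE (g ` {..<n})"
    unfolding Ext_witness_def by auto
  moreover from zero \<open>f \<in> EE (g ` {..<n})\<close> have "f \<noteq> (\<lambda>_. 0)" by auto
  ultimately show "\<exists>f\<in>A - {\<lambda>_. 0}. f \<in> EE (g ` {..<n})" by auto
qed

lemma Ext_witness_gpos: "g \<in> gpos \<Longrightarrow> Ext_witness n As {g}"
  unfolding Ext_witness_def using subsetD[OF gpos_subset_EE] by blast

lemma Ext_witness_self: "Ext_witness 1 (\<lambda>_. B) B"
  unfolding Ext_witness_def
proof (intro ballI impI)
  fix g :: "nat \<Rightarrow> _" assume "g \<in> Pi\<^sub>E {..<1} (\<lambda>_. B)"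
  then have "g 0 \<in> B" by auto
  moreover have "g 0 \<in> g ` {..<1}" by simp
  then have "g 0 \<in> EE (g ` {..<1})" by (rule subsetD[OF subset_EE])
  ultimately show "\<exists>f\<in>B. f \<in> EE (g ` {..<1})" by blast
qed

lemma Ext_witness_dominate:
  assumes "Ext_witness n As A" "A \<subseteq> gambles" "\<forall>g\<in>A. F g \<in> gambles \<and> (\<forall>w. g w \<le> F g w)"
  shows "Ext_witness n As (F ` A)"
  unfolding Ext_witness_def
proof (intro ballI impI)
  fix g assume "g \<in> Pi\<^sub>E {..<n} As" "(\<lambda>_. 0) \<notin> EE (g ` {..<n})"
  with assms(1) obtain f where "f \<in> A" "f \<in> EE (g ` {..<n})"
    unfolding Ext_witness_def by blast
  with assms(2,3) have "F f \<in> EE (g ` {..<n})" by (blast intro: EE_upward)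
  with \<open>f \<in> A\<close> show "\<exists>f\<in>F ` A. f \<in> EE (g ` {..<n})" by blast
qed

lemma image_PiE_posi_subset_gambles:
  fixes n :: nat
  assumes "\<forall>i<n. Bs i \<subseteq> gambles" "\<forall>h\<in>Pi\<^sub>E {..<n} Bs. F h \<in> posi (h ` {..<n})"
  shows "F ` Pi\<^sub>E {..<n} Bs \<subseteq> gambles"
proof
  fix u assume "u \<in> F ` Pi\<^sub>E {..<n} Bs"
  then obtain h where h: "h \<in> Pi\<^sub>E {..<n} Bs" "u = F h" by blast
  with assms(1) have "h ` {..<n} \<subseteq> gambles" by (auto simp: PiE_iff)
  then have "posi (h ` {..<n}) \<subseteq> gambles" by (rule posi_subset_gambles)
  with assms(2) h show "u \<in> gambles" by auto
qed

lemma exists_covering_family: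
  fixes ns :: "nat \<Rightarrow> nat" and Ass :: "nat \<Rightarrow> nat \<Rightarrow> 'a set"
  assumes "A0 \<in> \<A>" and "\<forall>i<n. \<forall>j<ns i. Ass i j \<in> \<A>"
  shows "\<exists>N::nat. \<exists>Cs. N \<ge> 1 \<and> (\<forall>j<N. Cs j \<in> \<A>) \<and>
     (\<forall>g\<in>Pi\<^sub>E {..<N} Cs. \<forall>i<n. \<exists>g'\<in>Pi\<^sub>E {..<ns i} (Ass i). g' ` {..<ns i} \<subseteq> g ` {..<N})"
  using assms(2)
proof (induction n)
  case 0
  show ?case using assms(1) by (intro exI[of _ "1::nat"] exI[of _ "\<lambda>_. A0"]) auto
next
  case (Suc n)
  then have "\<forall>i<n. \<forall>j<ns i. Ass i j \<in> \<A>" by simp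
  with Suc.IH obtain N :: nat and Cs where N: "N \<ge> 1" "\<forall>j<N. Cs j \<in> \<A>"
    and cover: "\<forall>g\<in>Pi\<^sub>E {..<N} Cs. \<forall>i<n. \<exists>g'\<in>Pi\<^sub>E {..<ns i} (Ass i). g' ` {..<ns i} \<subseteq> g ` {..<N}"
    by blast
  define Cs' where "Cs' j = (if j < N then Cs j else Ass n (j - N))" for j
  have cover': "\<forall>g\<in>Pi\<^sub>E {..<N + ns n} Cs'. \<forall>i<Suc n.
      \<exists>g'\<in>Pi\<^sub>E {..<ns i} (Ass i). g' ` {..<ns i} \<subseteq> g ` {..<N + ns n}"
  proof (intro ballI allI impI)
    fix g i assume g: "g \<in> Pi\<^sub>E {..<N + ns n} Cs'" and i: "i < Suc n"
    show "\<exists>g'\<in>Pi\<^sub>E {..<ns i} (Ass i). g' ` {..<ns i} \<subseteq> g ` {..<N + ns n}"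
  proof (cases "i < n")
    case True
    have "g j \<in> Cs j" if "j < N" for j
      using PiE_mem[OF g, of j] that by (simp add: Cs'_def)
    then have "restrict g {..<N} \<in> Pi\<^sub>E {..<N} Cs" by auto
    from cover[rule_format, OF this True] obtain g' where
      "g' \<in> Pi\<^sub>E {..<ns i} (Ass i)" "g' ` {..<ns i} \<subseteq> restrict g {..<N} ` {..<N}"
      by blast
    moreover have "restrict g {..<N} ` {..<N} \<subseteq> g ` {..<N + ns n}" by auto
    ultimately show ?thesis by blast
  next
    case False
    with i have "i = n" by simp
    have "g (N + j) \<in> Ass n j" if "j < ns n" for j
      using PiE_mem[OF g, of "N + j"] that by (simp add: Cs'_def)
    moreover define g' where "g' = (\<lambda>j\<in>{..<ns n}. g (N + j))"
    ultimately have "g' \<in> Pi\<^sub>E {..<ns n} (Ass n)" by auto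
    moreover have "g' ` {..<ns n} \<subseteq> g ` {..<N + ns n}" unfolding g'_def by auto
    ultimately show ?thesis using \<open>i = n\<close> by blast
  qed
  qed
  show ?case
  proof (intro exI[of _ "N + ns n"] exI[of _ Cs'] conjI)
    show "N + ns n \<ge> 1" using N(1) by simp
    show "\<forall>j<N + ns n. Cs' j \<in> \<A>" using N Suc.prems by (auto simp: Cs'_def)
  qed (fact cover')
qed

lemma Ext_witness_posi:
  assumes witness: "\<forall>i<n. Ext_witness (ns i) (Ass i) (Bs i)"
    and cover: "\<forall>g\<in>Pi\<^sub>E {..<N} Cs. \<forall>i<n. \<exists>g'\<in>Pi\<^sub>E {..<ns i} (Ass i). g' ` {..<ns i} \<subseteq> g ` {..<N}"
    and F: "\<forall>h\<in>Pi\<^sub>E {..<n} Bs. F h \<in> posi (h ` {..<n})"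
  shows "Ext_witness N Cs (F ` Pi\<^sub>E {..<n} Bs)"
  unfolding Ext_witness_def
proof (intro ballI impI)
  fix g assume g: "g \<in> Pi\<^sub>E {..<N} Cs" and zero: "(\<lambda>_. 0) \<notin> EE (g ` {..<N})"
  have "\<exists>f\<in>Bs i. f \<in> EE (g ` {..<N})" if "i \<in> {..<n}" for i
  proof -
    from that have i: "i < n" by simp
    obtain g' where g': "g' \<in> Pi\<^sub>E {..<ns i} (Ass i)" "g' ` {..<ns i} \<subseteq> g ` {..<N}"
      using cover[rule_format, OF g i] by blast
    then have sub: "EE (g' ` {..<ns i}) \<subseteq> EE (g ` {..<N})" by (intro EE_mono)
    with zero have "(\<lambda>_. 0) \<notin> EE (g' ` {..<ns i})" by (meson subsetD)
    with witness[rule_format, OF i] g'(1) obtain f where "f \<in> Bs i" "f \<in> EE (g' ` {..<ns i})"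
      unfolding Ext_witness_def by auto
    with sub show ?thesis by (meson subsetD)
  qed
  then have "\<exists>h\<in>Pi\<^sub>E {..<n} Bs. \<forall>i\<in>{..<n}. h i \<in> EE (g ` {..<N})"
    by (rule PiE_choice)
  then obtain h where h: "h \<in> Pi\<^sub>E {..<n} Bs" "\<forall>i\<in>{..<n}. h i \<in> EE (g ` {..<N})" ..
  from h(2) have "h ` {..<n} \<subseteq> EE (g ` {..<N})" by (simp add: image_subset_iff)
  then have "F h \<in> posi (EE (g ` {..<N}))"
    using F[rule_format, OF h(1)] by (rule subsetD[OF posi_mono])
  then have "F h \<in> EE (g ` {..<N})" by (rule subsetD[OF posi_EE])
  moreover have "F h \<in> F ` Pi\<^sub>E {..<n} Bs" using h(1) by (rule imageI)
  ultimately show "\<exists>f\<in>F ` Pi\<^sub>E {..<n} Bs. f \<in> EE (g ` {..<N})" by (rule bexI)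
qed

lemma Ext_image_posi:
  fixes n :: nat
  assumes ne: "\<A> \<noteq> {}" and Bs: "\<forall>i<n. Bs i \<in> Ext \<A>"
    and F: "\<forall>h\<in>Pi\<^sub>E {..<n} Bs. F h \<in> posi (h ` {..<n})"
  shows "F ` Pi\<^sub>E {..<n} Bs \<in> Ext \<A>"
proof -
  obtain A0 where "A0 \<in> \<A>" using ne by blast
  have "\<forall>i<n. \<exists>m As. (\<forall>j<m. As j \<in> \<A>) \<and> Ext_witness m As (Bs i)"
    using Bs unfolding Ext_iff_witness[OF ne] by blast
  then obtain ns Ass where wit: "\<forall>i<n. (\<forall>j<ns i. Ass i j \<in> \<A>) \<and> Ext_witness (ns i) (Ass i) (Bs i)"
    by metis
  then obtain N :: nat and Cs where N: "N \<ge> 1" "\<forall>j<N. Cs j \<in> \<A>"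
    and cover: "\<forall>g\<in>Pi\<^sub>E {..<N} Cs. \<forall>i<n. \<exists>g'\<in>Pi\<^sub>E {..<ns i} (Ass i). g' ` {..<ns i} \<subseteq> g ` {..<N}"
    using exists_covering_family[OF \<open>A0 \<in> \<A>\<close>, of n ns Ass] by blast
  have "Ext_witness N Cs (F ` Pi\<^sub>E {..<n} Bs)"
    using wit by (intro Ext_witness_posi[OF _ cover F]) blast
  moreover have "F ` Pi\<^sub>E {..<n} Bs \<subseteq> gambles"
    using Bs by (intro image_PiE_posi_subset_gambles[OF _ F]) (meson Ext_subset_gambles)
  ultimately show ?thesis using N unfolding Ext_iff_witness[OF ne] by blast
qed

lemma coherent_Ext_empty: "coherent (Ext {})"
  unfolding coherent_def Ext_empty
proof (intro conjI ballI allI impI; (elim conjE CollectE)?)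
  fix A :: "('a \<Rightarrow> real) set"
  assume "A \<subseteq> gambles" "A \<inter> gpos \<noteq> {}"
  then show "A - {\<lambda>_. 0} \<in> {B. B \<subseteq> gambles \<and> B \<inter> gpos \<noteq> {}}"
    using zero_notin_gpos by blast
next
  fix A :: "('a \<Rightarrow> real) set" and F
  assume A: "A \<inter> gpos \<noteq> {}" and F: "\<forall>g\<in>A. F g \<in> gambles \<and> (\<forall>w. g w \<le> F g w)"
  then obtain g where "g \<in> A" "g \<in> gpos" by blast
  with F have "F g \<in> gpos" by (blast intro: gpos_upward)
  with F \<open>g \<in> A\<close> show "F ` A \<in> {B. B \<subseteq> gambles \<and> B \<inter> gpos \<noteq> {}}" by blast
next
  fix n :: nat and As :: "nat \<Rightarrow> ('a \<Rightarrow> real) set" and F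
  assume As: "\<forall>i<n. As i \<in> {B. B \<subseteq> gambles \<and> B \<inter> gpos \<noteq> {}}"
    and F: "\<forall>g\<in>Pi\<^sub>E {..<n} As. F g \<in> posi (g ` {..<n})"
  have "\<exists>h\<in>Pi\<^sub>E {..<n} As. \<forall>i\<in>{..<n}. h i \<in> gpos"
    using As by (intro PiE_choice) auto
  then obtain h where h: "h \<in> Pi\<^sub>E {..<n} As" "\<forall>i\<in>{..<n}. h i \<in> gpos" ..
  then have "h ` {..<n} \<subseteq> gpos" by auto
  then have "F h \<in> posi gpos" using F[rule_format, OF h(1)] by (rule subsetD[OF posi_mono])
  then have "F h \<in> gpos" by (rule subsetD[OF posi_gpos])
  moreover have "F h \<in> F ` Pi\<^sub>E {..<n} As" using h(1) by (rule imageI)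
  moreover have "F ` Pi\<^sub>E {..<n} As \<subseteq> gambles"
    using As by (intro image_PiE_posi_subset_gambles[OF _ F]) simp
  ultimately show "F ` Pi\<^sub>E {..<n} As \<in> {B. B \<subseteq> gambles \<and> B \<inter> gpos \<noteq> {}}" by blast
qed (auto simp: gpos_iff)

lemma coherent_Ext:
  assumes ne: "\<A> \<noteq> {}" and "{} \<notin> Ext \<A>"
  shows "coherent (Ext \<A>)"
  unfolding coherent_def
proof (intro conjI ballI allI impI; (elim conjE)?)
  show "{} \<notin> Ext \<A>" by fact
next
  fix A assume A: "A \<in> Ext \<A>"
  then have "A \<subseteq> gambles" by (rule Ext_subset_gambles)
  then have "A - {\<lambda>_. 0} \<subseteq> gambles" by blast
  with A show "A - {\<lambda>_. 0} \<in> Ext \<A>"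
    by (rule Ext_transfer[OF ne]) (rule Ext_witness_Diff_zero)
next
  fix g :: "'a \<Rightarrow> real" assume g: "g \<in> gpos"
  obtain A0 where "A0 \<in> \<A>" using ne by blast
  moreover have "Ext_witness 1 (\<lambda>_. A0) {g}" using g by (rule Ext_witness_gpos)
  moreover have "{g} \<subseteq> gambles" using g by (simp add: gpos_iff)
  ultimately show "{g} \<in> Ext \<A>"
    unfolding Ext_iff_witness[OF ne] by (intro conjI exI[of _ "1::nat"] exI[of _ "\<lambda>_. A0"]) simp_all
next
  fix A B assume A: "A \<in> Ext \<A>" and "A \<subseteq> B" "B \<subseteq> gambles"
  from A \<open>B \<subseteq> gambles\<close> show "B \<in> Ext \<A>"
    by (rule Ext_transfer[OF ne]) (rule Ext_witness_mono[OF _ \<open>A \<subseteq> B\<close>])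
next
  fix A F assume A: "A \<in> Ext \<A>" and F: "\<forall>g\<in>A. F g \<in> gambles \<and> (\<forall>w. g w \<le> F g w)"
  from A have "A \<subseteq> gambles" by (rule Ext_subset_gambles)
  from F have "F ` A \<subseteq> gambles" by blast
  with A show "F ` A \<in> Ext \<A>"
    by (rule Ext_transfer[OF ne]) (rule Ext_witness_dominate[OF _ \<open>A \<subseteq> gambles\<close> F])
next
  fix n :: nat and Bs F assume "\<forall>i<n. Bs i \<in> Ext \<A>" "\<forall>g\<in>Pi\<^sub>E {..<n} Bs. F g \<in> posi (g ` {..<n})"
  then show "F ` Pi\<^sub>E {..<n} Bs \<in> Ext \<A>" by (rule Ext_image_posi[OF ne])
qed

lemma coherent_empty_notin: "coherent K \<Longrightarrow> {} \<notin> K"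
  unfolding coherent_def by (elim conjE) simp

lemma coherent_Diff_zero: "coherent K \<Longrightarrow> A \<in> K \<Longrightarrow> A - {\<lambda>_. 0} \<in> K"
  unfolding coherent_def by (elim conjE) simp

lemma coherent_gpos: "coherent K \<Longrightarrow> g \<in> gpos \<Longrightarrow> {g} \<in> K"
  unfolding coherent_def by (elim conjE) simp

lemma coherent_superset: "coherent K \<Longrightarrow> A \<in> K \<Longrightarrow> A \<subseteq> B \<Longrightarrow> B \<subseteq> gambles \<Longrightarrow> B \<in> K"
  unfolding coherent_def by (elim conjE) simp

lemma coherent_dominate:
  "coherent K \<Longrightarrow> A \<in> K \<Longrightarrow> \<forall>g\<in>A. F g \<in> gambles \<and> (\<forall>w. g w \<le> F g w) \<Longrightarrow> F ` A \<in> K"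
  unfolding coherent_def by (elim conjE) simp

lemma coherent_image_posi:
  fixes n :: nat
  assumes "coherent K" "n \<ge> 1" "\<forall>i<n. As i \<in> K" "\<forall>g\<in>Pi\<^sub>E {..<n} As. F g \<in> posi (g ` {..<n})"
  shows "F ` Pi\<^sub>E {..<n} As \<in> K"
proof -
  from assms(1) have "\<forall>n::nat. \<forall>As F. n \<ge> 1 \<and> (\<forall>i<n. As i \<in> K) \<and>
      (\<forall>g\<in>Pi\<^sub>E {..<n} As. F g \<in> posi (g ` {..<n})) \<longrightarrow> F ` Pi\<^sub>E {..<n} As \<in> K"
    unfolding coherent_def by (elim conjE)
  then show ?thesis using assms(2-4) by blast
qed

lemma Ext_witness_dominated:
  assumes "Ext_witness n As B" "B \<inter> gpos = {}" "g \<in> Pi\<^sub>E {..<n} As"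
  shows "\<exists>a\<in>posi (g ` {..<n}). (\<forall>w. a w \<le> 0) \<or> (\<exists>f\<in>B. \<forall>w. a w \<le> f w)"
proof (cases "(\<lambda>_. 0) \<in> EE (g ` {..<n})")
  case True
  with EE_cases[OF True] zero_notin_gpos show ?thesis by auto
next
  case False
  with assms obtain f where "f \<in> B" "f \<in> EE (g ` {..<n})"
    unfolding Ext_witness_def by blast
  with assms(2) EE_cases[of f] show ?thesis by blast
qed

lemma Ext_subset_coherent:
  assumes K: "coherent K" and "\<A> \<subseteq> K"
  shows "Ext \<A> \<subseteq> K"
proof
  fix B assume B: "B \<in> Ext \<A>"
  have B_gambles: "B \<subseteq> gambles" using B by (rule Ext_subset_gambles)
  show "B \<in> K"
  proof (cases "B \<inter> gpos = {}")
    case False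
    then obtain g where "g \<in> B" "g \<in> gpos" by blast
    with K B_gambles show ?thesis by (blast intro: coherent_gpos coherent_superset)
  next
    case True
    with B have ne: "\<A> \<noteq> {}" by (auto simp: Ext_empty)
    with B obtain n As where n: "n \<ge> 1" and As: "\<forall>i<n. As i \<in> \<A>" and W: "Ext_witness n As B"
      by (auto simp: Ext_iff_witness)
    have "\<forall>g\<in>Pi\<^sub>E {..<n} As. \<exists>a. a \<in> posi (g ` {..<n}) \<and>
        ((\<forall>w. a w \<le> 0) \<or> (\<exists>f\<in>B. \<forall>w. a w \<le> f w))"
      using Ext_witness_dominated[OF W True] by blast
    then obtain F1 where F1: "\<forall>g\<in>Pi\<^sub>E {..<n} As. F1 g \<in> posi (g ` {..<n}) \<and>
        ((\<forall>w. F1 g w \<le> 0) \<or> (\<exists>f\<in>B. \<forall>w. F1 g w \<le> f w))"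
      by (auto dest: bchoice)
    define S where "S = F1 ` Pi\<^sub>E {..<n} As"
    have "S \<in> K"
      unfolding S_def using F1 As \<open>\<A> \<subseteq> K\<close> by (blast intro: coherent_image_posi[OF K n])
    have "\<forall>u\<in>S. \<exists>f. f \<in> gambles \<and> (\<forall>w. u w \<le> f w) \<and> (f = (\<lambda>_. 0) \<or> f \<in> B)"
      unfolding S_def using F1 B_gambles zero_in_gambles by blast
    then obtain F2 where F2: "\<forall>u\<in>S. F2 u \<in> gambles \<and> (\<forall>w. u w \<le> F2 u w) \<and> (F2 u = (\<lambda>_. 0) \<or> F2 u \<in> B)"
      by (auto dest: bchoice)
    have "F2 ` S - {\<lambda>_. 0} \<in> K"
      using F2 \<open>S \<in> K\<close> by (blast intro: coherent_Diff_zero[OF K] coherent_dominate[OF K])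
    moreover have "F2 ` S - {\<lambda>_. 0} \<subseteq> B" using F2 by blast
    ultimately show ?thesis using K B_gambles by (blast intro: coherent_superset)
  qed
qed

lemma subset_Ext:
  assumes "\<A> \<subseteq> Pow gambles"
  shows "\<A> \<subseteq> Ext \<A>"
proof
  fix B assume "B \<in> \<A>"
  then have ne: "\<A> \<noteq> {}" by blast
  show "B \<in> Ext \<A>"
    unfolding Ext_iff_witness[OF ne] using \<open>B \<in> \<A>\<close> assms Ext_witness_self[of B]
    by (intro conjI exI[of _ "1::nat"] exI[of _ "\<lambda>_. B"]) auto
qed

theorem mainTheorem3:
  fixes \<A> :: "('w \<Rightarrow> real) set set"
  assumes "\<A> \<subseteq> Pow gambles"
  shows "({} \<notin> Ext \<A> \<longrightarrow>
            coherent (Ext \<A>) \<and> \<A> \<subseteq> Ext \<A> \<and>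
            (\<forall>K. K \<subseteq> Pow gambles \<and> coherent K \<and> \<A> \<subseteq> K \<longrightarrow> Ext \<A> \<subseteq> K))
       \<and> ({} \<in> Ext \<A> \<longrightarrow> \<not> (\<exists>K. K \<subseteq> Pow gambles \<and> coherent K \<and> \<A> \<subseteq> K))"
proof (intro conjI impI)
  assume "{} \<notin> Ext \<A>"
  then show "coherent (Ext \<A>)"
    by (cases "\<A> = {}") (simp_all add: coherent_Ext_empty coherent_Ext)
  show "\<A> \<subseteq> Ext \<A>" using assms by (rule subset_Ext)
  show "\<forall>K. K \<subseteq> Pow gambles \<and> coherent K \<and> \<A> \<subseteq> K \<longrightarrow> Ext \<A> \<subseteq> K"
    using Ext_subset_coherent by blast
next
  assume "{} \<in> Ext \<A>"
  then show "\<not> (\<exists>K. K \<subseteq> Pow gambles \<and> coherent K \<and> \<A> \<subseteq> K)"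
    using Ext_subset_coherent coherent_empty_notin by blast
qed

end
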